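(* For $|q|<1$, $$\sum_{n=0}^\infty\frac{(-1)^n(q;q^2)_{2n}\,q^{2n^2}}{(q^8;q^8)_n(-q^2;q^4)_{n}}=(-q^3,-q^5,q^8;q^8)_\infty\frac{(q^2;q^4)_\infty}{(q^4;q^4)_\infty}.$$
   Context: $(a;q)_n=\prod_{k=0}^{n-1}(1-aq^k)$, $(a;q)_\infty=\prod_{k\ge0}(1-aq^k)$, $(a_1,\dots,a_r;q)_\infty=\prod_i(a_i;q)_\infty$. *)

theory Defs
  imports "HOL-Analysis.Analysis"
begin

definition qpoch :: "complex \<Rightarrow> complex \<Rightarrow> nat \<Rightarrow> complex" where
  "qpoch a q n = (\<Prod>k<n. 1 - a * q ^ k)"

definition qpoch_inf :: "complex \<Rightarrow> complex \<Rightarrow> complex" where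
  "qpoch_inf a q = (\<Prod>k. 1 - a * q ^ k)"

end

theory Submission
  imports Defs
begin

(* For ab = p, the series
     F(x) = sum_n (a;p)_n (b;p)_n p^(n choose 2) x^n / ((p^2;p^2)_n (x;p)_n)
   satisfies (1 - x)(1 - xp) F(x) = (1 - ax)(1 - bx) F(xp^2), because the termwise difference
   of the two sides telescopes. Iterating N times and letting N tend to infinity, using that F is
   continuous at 0 with F(0) = 1, gives F(c) = (ac;p^2)_inf (bc;p^2)_inf / (c;p)_inf.
   The theorem is the case p = q^4, a = q, b = q^3, c = -q^2, combined with
   (q^4;q^4)_inf = (q^2;q^4)_inf (-q^2;q^4)_inf (q^8;q^8)_inf. *)

lemma qpoch_0 [simp]: "qpoch x y 0 = 1"
  by (simp add: qpoch_def)

lemma qpoch_Suc: "qpoch x y (Suc n) = qpoch x y n * (1 - x * y ^ n)"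
  by (simp add: qpoch_def)

lemma qpoch_add: "qpoch x y (m + n) = qpoch x y m * qpoch (x * y ^ m) y n"
  by (induction n) (simp_all add: qpoch_Suc power_add mult_ac)

lemma qpoch_two: "qpoch x y 2 = (1 - x) * (1 - x * y)"
  by (simp add: numeral_2_eq_2 qpoch_Suc)

lemma qpoch_double: "qpoch x y (2 * n) = qpoch x (y\<^sup>2) n * qpoch (x * y) (y\<^sup>2) n"
  by (induction n) (simp_all add: qpoch_Suc power_mult[symmetric] mult_ac)

lemma qpoch_mult_qpoch_minus: "qpoch x y n * qpoch (-x) y n = qpoch (x\<^sup>2) (y\<^sup>2) n"
  by (induction n) (simp_all add: qpoch_Suc power_mult[symmetric] power2_eq_square algebra_simps)

lemma norm_power2_less_one:
  fixes p :: "'a::real_normed_div_algebra"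
  shows "norm p < 1 \<Longrightarrow> norm (p\<^sup>2) < 1"
  by (simp add: norm_power power_less_one_iff)

lemma norm_mult_power_le:
  fixes x y :: "'a::real_normed_div_algebra"
  assumes "norm y \<le> 1"
  shows "norm (x * y ^ k) \<le> norm x"
  using assms by (simp add: norm_mult norm_power mult_left_le power_le_one)

lemma one_minus_mult_power_nonzero:
  fixes x y :: "'a::real_normed_div_algebra"
  assumes "norm x < 1" "norm y \<le> 1"
  shows "1 - x * y ^ k \<noteq> 0"
  using norm_mult_power_le[OF assms(2), of x k] assms(1) by auto

lemma qpoch_nonzero:
  assumes "norm x < 1" "norm y \<le> 1"
  shows "qpoch x y n \<noteq> 0"
  using one_minus_mult_power_nonzero[OF assms] by (simp add: qpoch_def)

lemma norm_qpoch_ge: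
  assumes "norm x \<le> r" "r \<le> 1" "norm y \<le> 1"
  shows "(1 - r) ^ n \<le> norm (qpoch x y n)"
proof -
  have "1 - r \<le> norm (1 - x * y ^ k)" for k
    using norm_triangle_ineq2[of 1 "x * y ^ k"] norm_mult_power_le[OF assms(3), of x k] assms(1)
    by simp
  then have "(\<Prod>k<n. 1 - r) \<le> (\<Prod>k<n. norm (1 - x * y ^ k))"
    using assms(2) by (intro prod_mono) simp
  then show ?thesis
    by (simp add: qpoch_def prod_norm)
qed

lemma convergent_prod_qpoch:
  fixes x y :: complex
  assumes "norm y < 1"
  shows "convergent_prod (\<lambda>k. 1 - x * y ^ k)"
proof -
  have "summable (\<lambda>k. norm (x * y ^ k))"
    unfolding norm_mult norm_power using assms by (intro summable_mult summable_geometric) simp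
  then have "summable (\<lambda>k. norm ((1 - x * y ^ k) - 1))"
    by simp
  then show ?thesis
    by (intro abs_convergent_prod_imp_convergent_prod summable_imp_abs_convergent_prod)
qed

lemma qpoch_tendsto_qpoch_inf:
  assumes "norm y < 1"
  shows "(\<lambda>n. qpoch x y n) \<longlonglongrightarrow> qpoch_inf x y"
proof -
  have "(\<lambda>n. qpoch x y (Suc n)) \<longlonglongrightarrow> qpoch_inf x y"
    using convergent_prod_LIMSEQ[OF convergent_prod_qpoch[OF assms]]
    by (simp add: qpoch_def qpoch_inf_def lessThan_Suc_atMost)
  then show ?thesis
    by (rule LIMSEQ_imp_Suc)
qed

lemma qpoch_even_tendsto_qpoch_inf:
  assumes "norm y < 1"
  shows "(\<lambda>n. qpoch x y (2 * n)) \<longlonglongrightarrow> qpoch_inf x y"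
  using LIMSEQ_subseq_LIMSEQ[OF qpoch_tendsto_qpoch_inf[OF assms], of "\<lambda>n. 2 * n"]
  by (simp add: strict_mono_def o_def)

lemma qpoch_inf_nonzero:
  assumes "norm x < 1" "norm y < 1"
  shows "qpoch_inf x y \<noteq> 0"
  unfolding qpoch_inf_def using assms
  by (intro prodinf_nonzero convergent_prod_qpoch one_minus_mult_power_nonzero) auto

lemma qpoch_inf_double:
  assumes "norm y < 1"
  shows "qpoch_inf x y = qpoch_inf x (y\<^sup>2) * qpoch_inf (x * y) (y\<^sup>2)"
proof -
  have "norm (y\<^sup>2) < 1"
    using assms by (rule norm_power2_less_one)
  then have "(\<lambda>n. qpoch x y (2 * n)) \<longlonglongrightarrow> qpoch_inf x (y\<^sup>2) * qpoch_inf (x * y) (y\<^sup>2)"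
    unfolding qpoch_double by (intro tendsto_mult qpoch_tendsto_qpoch_inf)
  then show ?thesis
    using qpoch_even_tendsto_qpoch_inf[OF assms] LIMSEQ_unique by blast
qed

lemma qpoch_inf_mult_qpoch_inf_minus:
  assumes "norm y < 1"
  shows "qpoch_inf x y * qpoch_inf (-x) y = qpoch_inf (x\<^sup>2) (y\<^sup>2)"
proof -
  have "norm (y\<^sup>2) < 1"
    using assms by (rule norm_power2_less_one)
  then have "(\<lambda>n. qpoch x y n * qpoch (-x) y n) \<longlonglongrightarrow> qpoch_inf (x\<^sup>2) (y\<^sup>2)"
    unfolding qpoch_mult_qpoch_minus by (rule qpoch_tendsto_qpoch_inf)
  then show ?thesis
    using assms by (metis LIMSEQ_unique tendsto_mult qpoch_tendsto_qpoch_inf)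
qed

lemma Suc_choose_two: "Suc n choose 2 = (n choose 2) + n"
  by (simp add: numeral_2_eq_2)

lemma choose_two_times_four: "4 * (n choose 2) + 2 * n = 2 * n\<^sup>2"
  by (induction n) (simp_all add: Suc_choose_two power2_eq_square)

definition qseries_coeff :: "complex \<Rightarrow> complex \<Rightarrow> complex \<Rightarrow> nat \<Rightarrow> complex" where
  "qseries_coeff a b p n = qpoch a p n * qpoch b p n * p ^ (n choose 2) / qpoch (p\<^sup>2) (p\<^sup>2) n"

definition qseries_term :: "complex \<Rightarrow> complex \<Rightarrow> complex \<Rightarrow> complex \<Rightarrow> nat \<Rightarrow> complex" where
  "qseries_term a b p x n = qseries_coeff a b p n * x ^ n / qpoch x p n"

definition qseries :: "complex \<Rightarrow> complex \<Rightarrow> complex \<Rightarrow> complex \<Rightarrow> complex" where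
  "qseries a b p x = (\<Sum>n. qseries_term a b p x n)"

lemma qseries_coeff_Suc:
  assumes "norm p < 1"
  shows "qseries_coeff a b p (Suc n) = qseries_coeff a b p n *
    ((1 - a * p ^ n) * (1 - b * p ^ n) * p ^ n / (1 - p\<^sup>2 * (p\<^sup>2) ^ n))"
proof -
  have "norm (p\<^sup>2) < 1"
    using assms by (rule norm_power2_less_one)
  then have "qpoch (p\<^sup>2) (p\<^sup>2) n \<noteq> 0" "1 - p\<^sup>2 * (p\<^sup>2) ^ n \<noteq> 0"
    using qpoch_nonzero[of "p\<^sup>2" "p\<^sup>2" n] one_minus_mult_power_nonzero[of "p\<^sup>2" "p\<^sup>2" n]
    by auto
  then show ?thesis
    by (simp add: qseries_coeff_def qpoch_Suc Suc_choose_two power_add field_simps)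
qed

lemma summable_norm_qseries_coeff_mult_power:
  assumes "norm p < 1" "0 \<le> t"
  shows "summable (\<lambda>n. norm (qseries_coeff a b p n) * t ^ n)"
proof -
  define ratio where
    "ratio n = (1 - a * p ^ n) * (1 - b * p ^ n) * p ^ n / (1 - p\<^sup>2 * (p\<^sup>2) ^ n)" for n
  have "ratio \<longlonglongrightarrow> (1 - a * 0) * (1 - b * 0) * 0 / (1 - p\<^sup>2 * 0)"
    unfolding ratio_def using assms norm_power2_less_one[OF assms(1)]
    by (intro tendsto_intros LIMSEQ_power_zero) auto
  then have "(\<lambda>n. norm (ratio n) * t) \<longlonglongrightarrow> 0"
    by (simp add: tendsto_mult_left_zero tendsto_norm_zero)
  then have "\<forall>\<^sub>F n in sequentially. norm (ratio n) * t < 1/2"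
    by (rule order_tendstoD(2)) simp
  then obtain N where N: "\<And>n. n \<ge> N \<Longrightarrow> norm (ratio n) * t < 1/2"
    by (auto simp: eventually_sequentially)
  show ?thesis
  proof (rule summable_ratio_test[of "1/2" N])
    fix n assume "n \<ge> N"
    have "norm (norm (qseries_coeff a b p (Suc n)) * t ^ Suc n)
        = norm (norm (qseries_coeff a b p n) * t ^ n) * (norm (ratio n) * t)"
      using assms by (simp add: qseries_coeff_Suc ratio_def norm_mult norm_divide)
    also have "\<dots> \<le> norm (norm (qseries_coeff a b p n) * t ^ n) * (1/2)"
      using N[OF \<open>n \<ge> N\<close>] by (intro mult_left_mono) auto
    finally show "norm (norm (qseries_coeff a b p (Suc n)) * t ^ Suc n)
        \<le> 1/2 * norm (norm (qseries_coeff a b p n) * t ^ n)"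
      by (simp add: mult.commute)
  qed simp
qed

lemma norm_qseries_term_le:
  assumes "norm p < 1" "norm x \<le> r" "r < 1"
  shows "norm (qseries_term a b p x n) \<le> norm (qseries_coeff a b p n) * (r / (1 - r)) ^ n"
proof -
  have "0 \<le> r"
    using assms(2) norm_ge_zero order_trans by blast
  then have "norm x ^ n / norm (qpoch x p n) \<le> r ^ n / (1 - r) ^ n"
    using assms norm_qpoch_ge[of x r p n] by (intro frac_le power_mono) auto
  then show ?thesis
    by (simp add: qseries_term_def norm_mult norm_divide norm_power power_divide mult_left_mono
        flip: times_divide_eq_right)
qed

lemma summable_qseries_term:
  assumes "norm p < 1" "norm x < 1"
  shows "summable (qseries_term a b p x)"
  using assms
  by (intro summable_comparison_test'[where N = 0,
        OF summable_norm_qseries_coeff_mult_power[of p "norm x / (1 - norm x)" a b]]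
      norm_qseries_term_le) auto

lemma continuous_on_cball_qseries:
  assumes "norm p < 1" "0 \<le> r" "r < 1"
  shows "continuous_on (cball 0 r) (qseries a b p)"
proof -
  have "uniform_limit (cball 0 r) (\<lambda>n x. \<Sum>i<n. qseries_term a b p x i) (qseries a b p) sequentially"
    unfolding qseries_def using assms
    by (intro Weierstrass_m_test[where M = "\<lambda>n. norm (qseries_coeff a b p n) * (r / (1 - r)) ^ n"])
       (auto intro: norm_qseries_term_le summable_norm_qseries_coeff_mult_power)
  moreover have "continuous_on (cball 0 r) (\<lambda>x. \<Sum>i<n. qseries_term a b p x i)" for n
  proof -
    have "qpoch x p i \<noteq> 0" if "x \<in> cball 0 r" for x i
      using that assms by (intro qpoch_nonzero) auto
    moreover have "continuous_on (cball 0 r) (\<lambda>x. qpoch x p i)" for i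
      unfolding qpoch_def by (intro continuous_intros)
    ultimately show ?thesis
      unfolding qseries_term_def by (intro continuous_intros) auto
  qed
  ultimately show ?thesis
    by (intro uniform_limit_theorem) auto
qed

lemma isCont_qseries:
  assumes "norm p < 1" "norm x < 1"
  shows "isCont (qseries a b p) x"
proof -
  define r where "r = (1 + norm x) / 2"
  have "continuous_on (cball 0 r) (qseries a b p)"
    using assms by (intro continuous_on_cball_qseries) (auto simp: r_def)
  moreover have "x \<in> interior (cball 0 r)"
    using assms by (simp add: r_def)
  ultimately show ?thesis
    by (rule continuous_on_interior)
qed

lemma qseries_0 [simp]: "qseries a b p 0 = 1"
proof -
  have "qseries_term a b p 0 = (\<lambda>n. if n = 0 then 1 else 0)"
    by (auto simp: qseries_term_def qseries_coeff_def binomial_eq_0 fun_eq_iff)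
  then show ?thesis
    using sums_unique[OF sums_single[of 0 "\<lambda>_. 1::complex"]] by (simp add: qseries_def)
qed

lemma qseries_term_Suc:
  assumes "norm p < 1" "norm x < 1"
  shows "qseries_term a b p x (Suc n) = qseries_term a b p x n *
    ((1 - a * p ^ n) * (1 - b * p ^ n) * p ^ n * x / ((1 - p\<^sup>2 * (p\<^sup>2) ^ n) * (1 - x * p ^ n)))"
  using assms by (simp add: qseries_term_def qseries_coeff_Suc qpoch_Suc mult_ac)

lemma qseries_term_shift:
  assumes "norm p < 1" "norm x < 1"
  shows "qseries_term a b p (x * p\<^sup>2) n = qseries_term a b p x n *
    ((p ^ n)\<^sup>2 * (1 - x) * (1 - x * p) / ((1 - x * p ^ n) * (1 - x * p * p ^ n)))"
proof -
  have "qpoch x p (n + 2) \<noteq> 0"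
    using assms by (simp add: qpoch_nonzero)
  then have nonzero: "qpoch x p n \<noteq> 0" "1 - x * p ^ n \<noteq> 0" "1 - x * p * p ^ n \<noteq> 0"
    by (simp_all add: numeral_2_eq_2 qpoch_Suc mult_ac)
  have "1 - x \<noteq> 0" "1 - x * p \<noteq> 0"
    using assms one_minus_mult_power_nonzero[of x p 1] by auto
  moreover have "qpoch x p 2 * qpoch (x * p\<^sup>2) p n = qpoch x p n * qpoch (x * p ^ n) p 2"
    using qpoch_add[of x p 2 n] qpoch_add[of x p n 2] by (simp add: add.commute)
  ultimately have "qpoch (x * p\<^sup>2) p n
      = qpoch x p n * ((1 - x * p ^ n) * (1 - x * p * p ^ n)) / ((1 - x) * (1 - x * p))"
    by (simp add: numeral_2_eq_2 qpoch_Suc eq_divide_eq mult_ac)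
  then show ?thesis
    using nonzero \<open>1 - x \<noteq> 0\<close> \<open>1 - x * p \<noteq> 0\<close>
    by (simp add: qseries_term_def power_mult_distrib power_mult[symmetric] field_simps)
qed

lemma qdifference_identity:
  fixes a b p x X :: "'a::comm_ring_1"
  assumes "a * b = p"
  shows "(1 - x * X) * (1 - x * p * X) - (1 - a * x) * (1 - b * x) * X\<^sup>2
       = (1 - X\<^sup>2) * (1 - x * p * X) - x * X * (1 - a * X) * (1 - b * X)"
  unfolding assms[symmetric] by (simp add: algebra_simps power2_eq_square)

lemma qseries_term_telescoping:
  assumes p: "norm p < 1" and ab: "a * b = p" and x: "norm x < 1"
  defines "G \<equiv> \<lambda>n. (1 - (p ^ n)\<^sup>2) * (1 - x) * (1 - x * p) / (1 - x * p ^ n)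
                  * qseries_term a b p x n"
  shows "(1 - x) * (1 - x * p) * qseries_term a b p x n
      - (1 - a * x) * (1 - b * x) * qseries_term a b p (x * p\<^sup>2) n = G n - G (Suc n)"
proof -
  define X where "X = p ^ n"
  define u where "u = qseries_term a b p x n"
  define C where "C = (1 - x) * (1 - x * p) * u / ((1 - x * X) * (1 - x * p * X))"
  have "(p\<^sup>2) ^ n = X\<^sup>2"
    by (simp add: X_def mult.commute flip: power_mult)
  then have shift: "qseries_term a b p (x * p\<^sup>2) n
      = u * (X\<^sup>2 * (1 - x) * (1 - x * p) / ((1 - x * X) * (1 - x * p * X)))"
    and G: "G n = (1 - X\<^sup>2) * (1 - x) * (1 - x * p) / (1 - x * X) * u"
      "G (Suc n) = (1 - p\<^sup>2 * X\<^sup>2) * (1 - x) * (1 - x * p) / (1 - x * p * X)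
        * (u * ((1 - a * X) * (1 - b * X) * X * x / ((1 - p\<^sup>2 * X\<^sup>2) * (1 - x * X))))"
    by (simp_all add: X_def u_def G_def qseries_term_shift[OF p x] qseries_term_Suc[OF p x]
        power_mult_distrib mult.assoc)
  have "1 - x * X \<noteq> 0" "1 - x * p * X \<noteq> 0"
    using one_minus_mult_power_nonzero[of x p n] one_minus_mult_power_nonzero[of x p "Suc n"] p x
    by (auto simp: X_def mult.assoc)
  moreover have "1 - p\<^sup>2 * X\<^sup>2 \<noteq> 0"
    using one_minus_mult_power_nonzero[of "p\<^sup>2" "p\<^sup>2" n] norm_power2_less_one[OF p]
      \<open>(p\<^sup>2) ^ n = X\<^sup>2\<close>
    by simp
  ultimately have
    "(1 - x) * (1 - x * p) * u - (1 - a * x) * (1 - b * x) * qseries_term a b p (x * p\<^sup>2) n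
       = C * ((1 - x * X) * (1 - x * p * X) - (1 - a * x) * (1 - b * x) * X\<^sup>2)"
    and G_factored: "G n = C * ((1 - X\<^sup>2) * (1 - x * p * X))"
      "G (Suc n) = C * (x * X * (1 - a * X) * (1 - b * X))"
    unfolding shift G C_def by (simp_all add: divide_simps) (simp add: algebra_simps)
  then show ?thesis
    unfolding u_def qdifference_identity[OF ab] G_factored by (simp add: right_diff_distrib)
qed

lemma qseries_functional_equation:
  assumes p: "norm p < 1" and ab: "a * b = p" and x: "norm x < 1"
  shows "(1 - x) * (1 - x * p) * qseries a b p x
       = (1 - a * x) * (1 - b * x) * qseries a b p (x * p\<^sup>2)"
proof -
  define G where
    "G n = (1 - (p ^ n)\<^sup>2) * (1 - x) * (1 - x * p) / (1 - x * p ^ n) * qseries_term a b p x n" for n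
  have "G \<longlonglongrightarrow> (1 - 0\<^sup>2) * (1 - x) * (1 - x * p) / (1 - x * 0) * 0"
    unfolding G_def using p x
    by (intro tendsto_intros LIMSEQ_power_zero summable_LIMSEQ_zero summable_qseries_term) auto
  then have "(\<lambda>n. G n - G (Suc n)) sums (G 0 - 0)"
    by (intro telescope_sums') simp
  then have "(\<lambda>n. (1 - x) * (1 - x * p) * qseries_term a b p x n
      - (1 - a * x) * (1 - b * x) * qseries_term a b p (x * p\<^sup>2) n) sums 0"
    using qseries_term_telescoping[OF p ab x] by (simp add: G_def)
  moreover have "(\<lambda>n. (1 - x) * (1 - x * p) * qseries_term a b p x n
      - (1 - a * x) * (1 - b * x) * qseries_term a b p (x * p\<^sup>2) n)
    sums ((1 - x) * (1 - x * p) * qseries a b p x - (1 - a * x) * (1 - b * x) * qseries a b p (x * p\<^sup>2))"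
    unfolding qseries_def using p x norm_mult_power_le[of p x 2]
    by (intro sums_diff sums_mult summable_sums summable_qseries_term) auto
  ultimately show ?thesis
    using sums_unique2 by force
qed

lemma qseries_iterate:
  assumes p: "norm p < 1" and ab: "a * b = p" and c: "norm c < 1"
  shows "qpoch c p (2 * N) * qseries a b p c
       = qpoch (a * c) (p\<^sup>2) N * qpoch (b * c) (p\<^sup>2) N * qseries a b p (c * (p\<^sup>2) ^ N)"
proof (induction N)
  case 0
  then show ?case by simp
next
  case (Suc N)
  define x where "x = c * (p\<^sup>2) ^ N"
  have x: "norm x < 1"
    using c norm_mult_power_le[of "p\<^sup>2" c N] norm_power2_less_one[OF p] by (simp add: x_def)
  have "qpoch c p (2 * Suc N) = qpoch c p (2 * N) * ((1 - x) * (1 - x * p))"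
    using qpoch_add[of c p "2 * N" 2] by (simp add: qpoch_two x_def power_mult)
  then have "qpoch c p (2 * Suc N) * qseries a b p c
      = (1 - x) * (1 - x * p) * (qpoch c p (2 * N) * qseries a b p c)"
    by (simp add: mult_ac)
  also have "\<dots> = qpoch (a * c) (p\<^sup>2) N * qpoch (b * c) (p\<^sup>2) N
      * ((1 - x) * (1 - x * p) * qseries a b p x)"
    unfolding Suc.IH by (simp add: x_def mult_ac)
  also have "\<dots> = qpoch (a * c) (p\<^sup>2) N * qpoch (b * c) (p\<^sup>2) N
      * ((1 - a * x) * (1 - b * x) * qseries a b p (x * p\<^sup>2))"
    by (simp add: qseries_functional_equation[OF p ab x])
  also have "\<dots> = qpoch (a * c) (p\<^sup>2) (Suc N) * qpoch (b * c) (p\<^sup>2) (Suc N)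
      * qseries a b p (c * (p\<^sup>2) ^ Suc N)"
    by (simp add: qpoch_Suc x_def mult_ac)
  finally show ?case .
qed

theorem qseries_eq_qpoch_inf:
  assumes p: "norm p < 1" and ab: "a * b = p" and c: "norm c < 1"
  shows "qseries a b p c = qpoch_inf (a * c) (p\<^sup>2) * qpoch_inf (b * c) (p\<^sup>2) / qpoch_inf c p"
proof -
  have p2: "norm (p\<^sup>2) < 1"
    using p by (rule norm_power2_less_one)
  have "(\<lambda>N. c * (p\<^sup>2) ^ N) \<longlonglongrightarrow> 0"
    using p2 by (intro tendsto_mult_right_zero LIMSEQ_power_zero)
  then have "(\<lambda>N. qseries a b p (c * (p\<^sup>2) ^ N)) \<longlonglongrightarrow> qseries a b p 0"
    by (intro isCont_tendsto_compose[where g = "qseries a b p"] isCont_qseries p) auto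
  then have "(\<lambda>N. qpoch c p (2 * N) * qseries a b p c)
      \<longlonglongrightarrow> qpoch_inf (a * c) (p\<^sup>2) * qpoch_inf (b * c) (p\<^sup>2) * 1"
    unfolding qseries_iterate[OF p ab c] by (intro tendsto_intros qpoch_tendsto_qpoch_inf p2) simp
  moreover have "(\<lambda>N. qpoch c p (2 * N) * qseries a b p c) \<longlonglongrightarrow> qpoch_inf c p * qseries a b p c"
    by (intro tendsto_intros qpoch_even_tendsto_qpoch_inf p)
  ultimately have "qpoch_inf c p * qseries a b p c = qpoch_inf (a * c) (p\<^sup>2) * qpoch_inf (b * c) (p\<^sup>2)"
    using LIMSEQ_unique by force
  then show ?thesis
    using qpoch_inf_nonzero[OF c p] by (simp add: field_simps)
qed

lemma qseries_term_q_q3_q4: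
  fixes q :: complex
  shows "qseries_term q (q^3) (q^4) (-(q^2)) n
       = (-1) ^ n * qpoch q (q^2) (2*n) * q ^ (2*n^2) / (qpoch (q^8) (q^8) n * qpoch (-(q^2)) (q^4) n)"
proof -
  have powers: "(q\<^sup>2)\<^sup>2 = q^4" "q * q\<^sup>2 = q^3" "(q^4)\<^sup>2 = q^8"
    by (simp_all flip: power_mult power_Suc)
  then have "qpoch q (q^2) (2*n) = qpoch q (q^4) n * qpoch (q^3) (q^4) n"
    using qpoch_double[of q "q^2" n] by simp
  moreover have "(q^4) ^ (n choose 2) * (-(q^2)) ^ n = (-1) ^ n * q ^ (2*n^2)"
  proof -
    have "(q^4) ^ (n choose 2) * (-(q^2)) ^ n = (-1) ^ n * q ^ (4 * (n choose 2) + 2 * n)"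
      by (simp add: power_minus[of "q\<^sup>2"] power_add power_mult)
    then show ?thesis
      by (simp only: choose_two_times_four)
  qed
  ultimately show ?thesis
    by (simp add: qseries_term_def qseries_coeff_def powers mult_ac)
qed

theorem mainTheorem7:
  fixes q :: complex
  assumes "norm q < 1"
  shows "(\<lambda>n. (-1) ^ n * qpoch q (q^2) (2*n) * q ^ (2*n^2)
              / (qpoch (q^8) (q^8) n * qpoch (-(q^2)) (q^4) n))
         sums (qpoch_inf (-(q^3)) (q^8) * qpoch_inf (-(q^5)) (q^8) * qpoch_inf (q^8) (q^8)
               * qpoch_inf (q^2) (q^4) / qpoch_inf (q^4) (q^4))"
proof -
  have q2: "norm (q^2) < 1" and q4: "norm (q^4) < 1"
    using assms by (simp_all add: norm_power power_less_one_iff)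
  have powers: "q * q^3 = q^4" "q * -(q^2) = -(q^3)" "q^3 * -(q^2) = -(q^5)"
      "(q^4)\<^sup>2 = q^8" "q^4 * q^4 = q^8" "(q^2)\<^sup>2 = q^4"
    by (simp_all flip: power_mult power_Suc power_add)
  have "(\<lambda>n. (-1) ^ n * qpoch q (q^2) (2*n) * q ^ (2*n^2)
              / (qpoch (q^8) (q^8) n * qpoch (-(q^2)) (q^4) n)) = qseries_term q (q^3) (q^4) (-(q^2))"
    by (simp add: fun_eq_iff qseries_term_q_q3_q4)
  moreover have "qseries_term q (q^3) (q^4) (-(q^2)) sums qseries q (q^3) (q^4) (-(q^2))"
    unfolding qseries_def using q2 q4 by (intro summable_sums summable_qseries_term) auto
  moreover have "qseries q (q^3) (q^4) (-(q^2))
      = qpoch_inf (-(q^3)) (q^8) * qpoch_inf (-(q^5)) (q^8) / qpoch_inf (-(q^2)) (q^4)"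
    using qseries_eq_qpoch_inf[of "q^4" q "q^3" "-(q^2)"] q2 q4 by (simp only: powers) simp
  moreover have "qpoch_inf (q^4) (q^4)
      = qpoch_inf (q^2) (q^4) * qpoch_inf (-(q^2)) (q^4) * qpoch_inf (q^8) (q^8)"
    using qpoch_inf_double[OF q4, of "q^4"] qpoch_inf_mult_qpoch_inf_minus[OF q4, of "q^2"]
    by (simp only: powers)
  then have "qpoch_inf (-(q^3)) (q^8) * qpoch_inf (-(q^5)) (q^8) / qpoch_inf (-(q^2)) (q^4)
      = qpoch_inf (-(q^3)) (q^8) * qpoch_inf (-(q^5)) (q^8) * qpoch_inf (q^8) (q^8)
        * qpoch_inf (q^2) (q^4) / qpoch_inf (q^4) (q^4)"
    using q2 q4 qpoch_inf_nonzero[of "q^4" "q^4"] by (simp add: qpoch_inf_nonzero)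
  ultimately show ?thesis
    by (simp only:)
qed

end
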